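(* Let $\Bbbk$ be a field of characteristic $0$, $n\ge2$, and let $(A,\mu,\alpha)$ be a multiplicative $n$-ary totally Hom-associative algebra over $\Bbbk$. Then for each integer $k\ge0$, $A_k=(A,\alpha^{2^k-1}\circ\mu,\alpha^{2^k})$ (all twisting maps equal to $\alpha^{2^k}$) is a multiplicative $n$-ary totally Hom-associative algebra.
   Context: An $n$-ary Hom-algebra $(V,\mu,(\alpha_1,\ldots,\alpha_{n-1}))$ is a vector space $V$ with an $n$-linear map $\mu$ (written $\mu(a_1,\ldots,a_n)=(a_1\cdots a_n)$) and linear maps $\alpha_i\colon V\to V$. It is multiplicative if all $\alpha_i$ equal one map $\alpha$ and $\alpha\circ\mu=\mu\circ\alpha^{\otimes n}$; such a Hom-algebra is written $(V,\mu,\alpha)$. $\alpha^m$ denotes the $m$-fold composite, $\alpha^0=\mathrm{Id}$. It is $n$-ary totally Hom-associative if for every $i\in\{1,\ldots,n-1\}$ and all $a_1,\ldots,a_{2n-1}$: $(\alpha_1(a_1),\ldots,\alpha_{i-1}(a_{i-1}),(a_i\cdots a_{i+n-1}),\alpha_i(a_{i+n}),\ldots,\alpha_{n-1}(a_{2n-1}))=(\alpha_1(a_1),\ldots,\alpha_i(a_i),(a_{i+1}\cdots a_{i+n}),\alpha_{i+1}(a_{i+n+1}),\ldots,\alpha_{n-1}(a_{2n-1}))$. *)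

theory Defs
  imports Main "HOL.Vector_Spaces"
begin

text \<open>An n-ary operation on V is modelled as a function on lists; only its values on
lists of length n matter.\<close>

definition nlinear :: "('k::field \<Rightarrow> 'v::ab_group_add \<Rightarrow> 'v) \<Rightarrow> nat \<Rightarrow> ('v list \<Rightarrow> 'v) \<Rightarrow> bool" where
  "nlinear scale n mu \<longleftrightarrow>
     (\<forall>xs i. length xs = n \<longrightarrow> i < n \<longrightarrow>
        Vector_Spaces.linear scale scale (\<lambda>x. mu (xs[i := x])))"

definition multiplicative_hom_algebra ::
  "('k::field \<Rightarrow> 'v::ab_group_add \<Rightarrow> 'v) \<Rightarrow> nat \<Rightarrow> ('v list \<Rightarrow> 'v) \<Rightarrow> ('v \<Rightarrow> 'v) \<Rightarrow> bool" where
  "multiplicative_hom_algebra scale n mu alpha \<longleftrightarrow>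
     nlinear scale n mu \<and> Vector_Spaces.linear scale scale alpha \<and>
     (\<forall>xs. length xs = n \<longrightarrow> alpha (mu xs) = mu (map alpha xs))"

text \<open>The paper's index i \<in> {1..n-1} corresponds to j = i - 1 \<in> {0..<n-1}; the list
a has length 2n-1 (a_1..a_{2n-1} is a!0..a!(2n-2)).\<close>
definition totally_hom_associative :: "nat \<Rightarrow> ('v list \<Rightarrow> 'v) \<Rightarrow> ('v \<Rightarrow> 'v) \<Rightarrow> bool" where
  "totally_hom_associative n mu alpha \<longleftrightarrow>
     (\<forall>j a. j < n - 1 \<longrightarrow> length a = 2 * n - 1 \<longrightarrow>
        mu (map alpha (take j a) @ [mu (take n (drop j a))] @ map alpha (drop (j + n) a)) =
        mu (map alpha (take (Suc j) a) @ [mu (take n (drop (Suc j) a))] @ map alpha (drop (Suc j + n) a)))"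

end

theory Submission
  imports Defs
begin

text \<open>Twisting a multiplicative totally Hom-associative algebra (A, mu, alpha) by a linear map
beta that commutes with alpha and is a morphism of mu gives again such an algebra
(A, beta o mu, beta o alpha): beta can be pulled out of every argument of mu, so both sides of each
Hom-associativity identity of the twisted algebra are beta^2 applied to the corresponding sides
for (A, mu, alpha). The power beta = alpha^(2^k - 1) has all these properties and turns
(A, mu, alpha) into A_k.\<close>

lemma linear_funpow:
  assumes "Vector_Spaces.linear scale scale f"
  shows "Vector_Spaces.linear scale scale (f ^^ q)"
proof (induction q)
  case 0
  have "vector_space scale" using assms by (simp add: linear_iff)
  then show ?case using vector_space.linear_id by (simp add: id_def)
next
  case (Suc q)
  then show ?case using Vector_Spaces.linear_compose[OF Suc assms] by (simp add: comp_def)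
qed

lemma funpow_nary_morphism:
  assumes "\<forall>xs. length xs = n \<longrightarrow> f (mu xs) = mu (map f xs)" and "length xs = n"
  shows "(f ^^ q) (mu xs) = mu (map (f ^^ q) xs)"
proof (induction q)
  case (Suc q)
  have "(f ^^ Suc q) (mu xs) = f (mu (map (f ^^ q) xs))" using Suc by simp
  also have "\<dots> = mu (map (f ^^ Suc q) xs)" using assms by (simp add: comp_def)
  finally show ?case .
qed simp

lemma multiplicative_hom_algebra_twist:
  fixes mu :: "'v::ab_group_add list \<Rightarrow> 'v"
  assumes mult: "multiplicative_hom_algebra scale n mu alpha"
    and lin: "Vector_Spaces.linear scale scale beta"
    and beta_mu: "\<forall>xs. length xs = n \<longrightarrow> beta (mu xs) = mu (map beta xs)"
    and beta_alpha: "\<And>x. beta (alpha x) = alpha (beta x)"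
  shows "multiplicative_hom_algebra scale n (\<lambda>xs. beta (mu xs)) (\<lambda>x. beta (alpha x))"
proof -
  have nl: "nlinear scale n mu" and la: "Vector_Spaces.linear scale scale alpha"
    and alpha_mu: "\<forall>xs. length xs = n \<longrightarrow> alpha (mu xs) = mu (map alpha xs)"
    using mult unfolding multiplicative_hom_algebra_def by auto
  have "nlinear scale n (\<lambda>xs. beta (mu xs))"
    unfolding nlinear_def
  proof (intro allI impI)
    fix xs :: "'v list" and i assume "length xs = n" "i < n"
    then have "Vector_Spaces.linear scale scale (\<lambda>x. mu (xs[i := x]))"
      using nl unfolding nlinear_def by auto
    from Vector_Spaces.linear_compose[OF this lin]
    show "Vector_Spaces.linear scale scale (\<lambda>x. beta (mu (xs[i := x])))"
      by (simp add: comp_def)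
  qed
  moreover have "Vector_Spaces.linear scale scale (\<lambda>x. beta (alpha x))"
    using Vector_Spaces.linear_compose[OF la lin] by (simp add: comp_def)
  moreover have "beta (alpha (beta (mu xs))) = beta (mu (map (\<lambda>x. beta (alpha x)) xs))"
    if "length xs = n" for xs
  proof -
    have "beta (alpha (beta (mu xs))) = beta (beta (alpha (mu xs)))"
      by (simp only: beta_alpha)
    also have "\<dots> = beta (beta (mu (map alpha xs)))"
      using that alpha_mu by simp
    also have "\<dots> = beta (mu (map beta (map alpha xs)))"
      using that beta_mu by simp
    finally show ?thesis by (simp add: comp_def)
  qed
  ultimately show ?thesis unfolding multiplicative_hom_algebra_def by blast
qed

lemma totally_hom_associative_twist:
  fixes mu :: "'v list \<Rightarrow> 'v"
  assumes assoc: "totally_hom_associative n mu alpha"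
    and beta_mu: "\<forall>xs. length xs = n \<longrightarrow> beta (mu xs) = mu (map beta xs)"
  shows "totally_hom_associative n (\<lambda>xs. beta (mu xs)) (\<lambda>x. beta (alpha x))"
  unfolding totally_hom_associative_def
proof (intro allI impI)
  fix j and a :: "'v list" assume j: "j < n - 1" and len: "length a = 2 * n - 1"
  define lhs where
    "lhs = map alpha (take j a) @ [mu (take n (drop j a))] @ map alpha (drop (j + n) a)"
  define rhs where
    "rhs = map alpha (take (Suc j) a) @ [mu (take n (drop (Suc j) a))] @ map alpha (drop (Suc j + n) a)"
  have "length lhs = n" "length rhs = n" using j len by (simp_all add: lhs_def rhs_def)
  moreover have "mu lhs = mu rhs"
    using assoc j len unfolding totally_hom_associative_def lhs_def rhs_def by blast
  ultimately have "beta (mu (map beta lhs)) = beta (mu (map beta rhs))"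
    using beta_mu by metis
  moreover have
    "map (\<lambda>x. beta (alpha x)) (take j a) @ [beta (mu (take n (drop j a)))]
        @ map (\<lambda>x. beta (alpha x)) (drop (j + n) a) = map beta lhs"
    "map (\<lambda>x. beta (alpha x)) (take (Suc j) a) @ [beta (mu (take n (drop (Suc j) a)))]
        @ map (\<lambda>x. beta (alpha x)) (drop (Suc j + n) a) = map beta rhs"
    unfolding lhs_def rhs_def by (simp_all del: take_Suc)
  ultimately show
    "beta (mu (map (\<lambda>x. beta (alpha x)) (take j a) @ [beta (mu (take n (drop j a)))]
        @ map (\<lambda>x. beta (alpha x)) (drop (j + n) a))) =
     beta (mu (map (\<lambda>x. beta (alpha x)) (take (Suc j) a) @ [beta (mu (take n (drop (Suc j) a)))]
        @ map (\<lambda>x. beta (alpha x)) (drop (Suc j + n) a)))"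
    by simp
qed

lemma multiplicative_totally_hom_associative_funpow_twist:
  assumes mult: "multiplicative_hom_algebra scale n mu alpha"
    and assoc: "totally_hom_associative n mu alpha"
  shows "multiplicative_hom_algebra scale n (\<lambda>xs. (alpha ^^ q) (mu xs)) (alpha ^^ Suc q) \<and>
         totally_hom_associative n (\<lambda>xs. (alpha ^^ q) (mu xs)) (alpha ^^ Suc q)"
proof -
  have alpha_mu: "\<forall>xs. length xs = n \<longrightarrow> alpha (mu xs) = mu (map alpha xs)"
    and la: "Vector_Spaces.linear scale scale alpha"
    using mult unfolding multiplicative_hom_algebra_def by auto
  have power_mu: "\<forall>xs. length xs = n \<longrightarrow> (alpha ^^ q) (mu xs) = mu (map (alpha ^^ q) xs)"
    using funpow_nary_morphism[OF alpha_mu] by blast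
  have power_Suc: "alpha ^^ Suc q = (\<lambda>x. (alpha ^^ q) (alpha x))"
    by (rule ext) (simp only: funpow_Suc_right comp_apply)
  show ?thesis
    unfolding power_Suc
    using multiplicative_hom_algebra_twist[OF mult linear_funpow[OF la] power_mu funpow_swap1[symmetric]]
      totally_hom_associative_twist[OF assoc power_mu]
    by blast
qed

theorem corollary2p6:
  fixes scale :: "'k::field_char_0 \<Rightarrow> 'v::ab_group_add \<Rightarrow> 'v"
    and n :: nat and mu :: "'v list \<Rightarrow> 'v" and alpha :: "'v \<Rightarrow> 'v"
  assumes "vector_space scale"
    and "n \<ge> 2"
    and "multiplicative_hom_algebra scale n mu alpha"
    and "totally_hom_associative n mu alpha"
  shows "\<forall>k::nat.
           multiplicative_hom_algebra scale n (\<lambda>xs. (alpha ^^ (2 ^ k - 1)) (mu xs)) (alpha ^^ (2 ^ k)) \<and>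
           totally_hom_associative n (\<lambda>xs. (alpha ^^ (2 ^ k - 1)) (mu xs)) (alpha ^^ (2 ^ k))"
proof
  fix k :: nat
  have "(2::nat) ^ k = Suc (2 ^ k - 1)" by simp
  then show "multiplicative_hom_algebra scale n (\<lambda>xs. (alpha ^^ (2 ^ k - 1)) (mu xs)) (alpha ^^ (2 ^ k)) \<and>
      totally_hom_associative n (\<lambda>xs. (alpha ^^ (2 ^ k - 1)) (mu xs)) (alpha ^^ (2 ^ k))"
    using multiplicative_totally_hom_associative_funpow_twist[OF assms(3,4), of "2 ^ k - 1"]
    by metis
qed

end
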